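(* Let $\lambda,\mu,\theta>0$ with $\lambda\theta>2\mu$, $\alpha,\hat\alpha\in\mathbb{R}$, and consider for a small parameter $\epsilon$ and delay $\Delta>0$ the system $$\dot q_1(t) = \lambda\,\frac{\exp\big(-\theta q_1(t-\Delta)+(\alpha+\epsilon\hat\alpha)\big)}{\exp\big(-\theta q_1(t-\Delta)+(\alpha+\epsilon\hat\alpha)\big)+\exp\big(-\theta q_2(t-\Delta)+\alpha\big)} - \mu\,q_1(t),$$ $$\dot q_2(t) = \lambda\,\frac{\exp\big(-\theta q_2(t-\Delta)+\alpha\big)}{\exp\big(-\theta q_1(t-\Delta)+(\alpha+\epsilon\hat\alpha)\big)+\exp\big(-\theta q_2(t-\Delta)+\alpha\big)} - \mu\,q_2(t).$$ Let $\omega_{\mathrm{cr}}=\tfrac12\sqrt{\lambda^2\theta^2-4\mu^2}$ and $\Delta_{\mathrm{cr}}=\arccos\!\big(-\tfrac{2\mu}{\lambda\theta}\big)/\omega_{\mathrm{cr}}$. Then the critical delay $\Delta_{\mathrm{mod}}$ at which the stability of the system about its equilibrium changes satisfies $$\Delta_{\mathrm{mod}}=\Delta_{\mathrm{cr}}+\frac{4\mu^3+\mu^2\lambda^2\theta^2\Delta_{\mathrm{cr}}}{4\omega_{\mathrm{cr}}^2(\lambda\theta+2\mu)^2}\,\epsilon^2\hat\alpha^2+O(\epsilon^3).$$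
   Context: This is the asymmetric two-queue delayed-information fluid model in which only the preference parameter of the first queue is perturbed ($\alpha\mapsto\alpha+\epsilon\hat\alpha$); $\lambda$ is the arrival rate, $\mu$ the service rate, $\theta$ the sensitivity to queue length. $\Delta_{\mathrm{cr}}$ is the critical delay of the unperturbed symmetric system. "Stability changes" refers to the linearization about the equilibrium passing from asymptotically stable to unstable as $\Delta$ crosses $\Delta_{\mathrm{mod}}$. *)

theory Defs
  imports "HOL-Analysis.Analysis" "HOL-Library.Landau_Symbols"
begin

text \<open>Right-hand sides (delayed routing terms) of the perturbed two-queue model;
  x, y are the delayed queue lengths q1(t - Delta), q2(t - Delta).\<close>

definition F1 :: "real \<Rightarrow> real \<Rightarrow> real \<Rightarrow> real \<Rightarrow> real \<Rightarrow> real \<Rightarrow> real \<Rightarrow> real" where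
  "F1 lam th al alh eps x y =
     lam * exp (- th * x + (al + eps * alh)) /
       (exp (- th * x + (al + eps * alh)) + exp (- th * y + al))"

definition F2 :: "real \<Rightarrow> real \<Rightarrow> real \<Rightarrow> real \<Rightarrow> real \<Rightarrow> real \<Rightarrow> real \<Rightarrow> real" where
  "F2 lam th al alh eps x y =
     lam * exp (- th * y + al) /
       (exp (- th * x + (al + eps * alh)) + exp (- th * y + al))"

definition is_equilibrium :: "real \<Rightarrow> real \<Rightarrow> real \<Rightarrow> real \<Rightarrow> real \<Rightarrow> real \<Rightarrow> real \<Rightarrow> real \<Rightarrow> bool" where
  "is_equilibrium lam mu th al alh eps x y \<longleftrightarrow>
     mu * x = F1 lam th al alh eps x y \<and> mu * y = F2 lam th al alh eps x y"

text \<open>Characteristic function det(s I + mu I - exp(-s Delta) B) of the linearization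
  u'(t) = - mu u(t) + B u(t - Delta) about the equilibrium (x, y), where B is the
  Jacobian of (F1, F2) at (x, y).\<close>

definition char_fun ::
  "real \<Rightarrow> real \<Rightarrow> real \<Rightarrow> real \<Rightarrow> real \<Rightarrow> real \<Rightarrow> real \<Rightarrow> real \<Rightarrow> real \<Rightarrow> complex \<Rightarrow> complex" where
  "char_fun lam mu th al alh eps x y D s =
     (let b11 = deriv (\<lambda>z. F1 lam th al alh eps z y) x;
          b12 = deriv (\<lambda>z. F1 lam th al alh eps x z) y;
          b21 = deriv (\<lambda>z. F2 lam th al alh eps z y) x;
          b22 = deriv (\<lambda>z. F2 lam th al alh eps x z) y;
          E = exp (- s * complex_of_real D)
      in (s + complex_of_real mu - E * complex_of_real b11) *
         (s + complex_of_real mu - E * complex_of_real b22)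
         - (E * complex_of_real b12) * (E * complex_of_real b21))"

definition lin_stable :: "real \<Rightarrow> real \<Rightarrow> real \<Rightarrow> real \<Rightarrow> real \<Rightarrow> real \<Rightarrow> real \<Rightarrow> bool" where
  "lin_stable lam mu th al alh eps D \<longleftrightarrow>
     (\<forall>x y. is_equilibrium lam mu th al alh eps x y \<longrightarrow>
        (\<forall>s. char_fun lam mu th al alh eps x y D s = 0 \<longrightarrow> Re s < 0))"

definition lin_unstable :: "real \<Rightarrow> real \<Rightarrow> real \<Rightarrow> real \<Rightarrow> real \<Rightarrow> real \<Rightarrow> real \<Rightarrow> bool" where
  "lin_unstable lam mu th al alh eps D \<longleftrightarrow>
     (\<exists>x y. is_equilibrium lam mu th al alh eps x y \<and>
        (\<exists>s. char_fun lam mu th al alh eps x y D s = 0 \<and> Re s > 0))"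

end

theory Submission
  imports Defs
begin

text \<open>
  The routing terms are lam (1 \<plusminus> tanh w) / 2 in the imbalance w = (eps alh - th (x - y)) / 2, so
  the Jacobian at an equilibrium has rank one and the characteristic function factors as
  (s + mu) (s + mu + K e^(-s D)) with K = (lam th / 2) (1 - tanh^2 u), where u is the unique
  solution of 2 u + (lam th / mu) tanh u = eps alh.  For K > mu the scalar factor has all roots
  in the open left half-plane exactly when D < arccos (- mu / K) / sqrt (K^2 - mu^2), and a root
  in the right half-plane beyond; so Delta_mod is this critical delay at K(eps alh).  As
  tanh^2 u = (eps alh mu / (lam th + 2 mu))^2 + O(eps^4) and K(0) = lam th / 2, a Taylor expansion
  of the critical delay at lam th / 2 gives the coefficient of eps^2.
\<close>

lemma tanh_real_le_self: "0 \<le> u \<Longrightarrow> tanh u \<le> (u::real)"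
proof -
  assume u: "0 \<le> u"
  have "(\<lambda>x. x - tanh x) 0 \<le> (\<lambda>x. x - tanh x) u"
  proof (rule DERIV_nonneg_imp_nondecreasing[OF u])
    fix x :: real
    show "\<exists>y. ((\<lambda>x. x - tanh x) has_real_derivative y) (at x) \<and> 0 \<le> y"
      by (intro exI[of _ "(tanh x)\<^sup>2"] conjI) (auto intro!: derivative_eq_intros simp: power2_eq_square)
  qed
  then show ?thesis by simp
qed

lemma abs_tanh_real_le: "\<bar>tanh u\<bar> \<le> \<bar>u::real\<bar>"
  by (metis abs_ge_zero tanh_real_le_self tanh_real_abs)

lemma diff_tanh_real_le_cube: "0 \<le> u \<Longrightarrow> u - tanh u \<le> (u::real) ^ 3 / 3"
proof -
  assume u: "0 \<le> u"
  have "(\<lambda>x. x ^ 3 / 3 - (x - tanh x)) 0 \<le> (\<lambda>x. x ^ 3 / 3 - (x - tanh x)) u"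
  proof (rule DERIV_nonneg_imp_nondecreasing[OF u])
    fix x :: real
    assume "0 \<le> x" "x \<le> u"
    then have "(tanh x)\<^sup>2 \<le> x\<^sup>2"
      by (metis abs_tanh_real_le power2_abs power_mono abs_ge_zero)
    then show "\<exists>y. ((\<lambda>x. x ^ 3 / 3 - (x - tanh x)) has_real_derivative y) (at x) \<and> 0 \<le> y"
      by (intro exI[of _ "x\<^sup>2 - (tanh x)\<^sup>2"] conjI)
         (auto intro!: derivative_eq_intros simp: power2_eq_square)
  qed
  then show ?thesis by simp
qed

lemma abs_diff_tanh_real_le_cube: "\<bar>u - tanh u\<bar> \<le> \<bar>u::real\<bar> ^ 3 / 3"
  using diff_tanh_real_le_cube[of "\<bar>u\<bar>"] tanh_real_le_self[of "\<bar>u\<bar>"]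
  by (cases "0 \<le> u") (auto simp: abs_if)

lemma taylor_remainder_le:
  fixes f f' f'' :: "real \<Rightarrow> real"
  assumes f': "\<And>y. y \<in> {x..b} \<Longrightarrow> (f has_real_derivative f' y) (at y)"
    and f'': "\<And>y. y \<in> {x..b} \<Longrightarrow> (f' has_real_derivative f'' y) (at y)"
    and bound: "\<And>y. y \<in> {x..b} \<Longrightarrow> \<bar>f'' y\<bar> \<le> M" and "x \<le> b"
  shows "\<bar>f x - f b - f' b * (x - b)\<bar> \<le> M * (x - b)\<^sup>2"
proof (cases "x = b")
  case False
  with \<open>x \<le> b\<close> have "x < b" by simp
  have "\<exists>z>x. z < b \<and> (f b - f' b * b) - (f x - f' b * x) = (b - x) * (f' z - f' b)"
    by (rule MVT2[OF \<open>x < b\<close>]) (use f' in \<open>auto intro!: derivative_eq_intros\<close>)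
  then obtain z where z: "x < z" "z < b" "f b - f' b * b - (f x - f' b * x) = (b - x) * (f' z - f' b)"
    by blast
  obtain w where w: "z < w" "w < b" "f' b - f' z = (b - z) * f'' w"
    using MVT2[OF \<open>z < b\<close>, of f' f''] f'' z by auto
  have "f x - f b - f' b * (x - b) = (b - x) * (f' b - f' z)"
    using z(3) by (simp add: algebra_simps)
  also have "\<dots> = (b - x) * (b - z) * f'' w" using w(3) by simp
  finally have "\<bar>f x - f b - f' b * (x - b)\<bar> = (b - x) * (b - z) * \<bar>f'' w\<bar>"
    using z \<open>x < b\<close> by (simp add: abs_mult)
  also have "\<dots> \<le> (b - x) * (b - x) * M"
    using z w bound[of w] by (intro mult_mono) auto
  finally show ?thesis by (simp add: power2_eq_square algebra_simps)
qed simp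

lemma taylor_remainder_bound:
  fixes f f' f'' :: "real \<Rightarrow> real"
  assumes "\<And>y. y \<in> {a..b} \<Longrightarrow> (f has_real_derivative f' y) (at y)"
    and "\<And>y. y \<in> {a..b} \<Longrightarrow> (f' has_real_derivative f'' y) (at y)"
    and "continuous_on {a..b} f''"
  obtains M where "0 \<le> M" "\<And>x. x \<in> {a..b} \<Longrightarrow> \<bar>f x - f b - f' b * (x - b)\<bar> \<le> M * (x - b)\<^sup>2"
proof -
  obtain M where "0 \<le> M" and M: "\<And>y. y \<in> {a..b} \<Longrightarrow> \<bar>f'' y\<bar> \<le> M"
    using continuous_on_compact_bound[OF compact_Icc assms(3)] by auto
  show ?thesis
  proof (rule that[OF \<open>0 \<le> M\<close>])
    fix x assume "x \<in> {a..b}"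
    then show "\<bar>f x - f b - f' b * (x - b)\<bar> \<le> M * (x - b)\<^sup>2"
      by (intro taylor_remainder_le[where f'' = f'' and M = M]) (use assms M in auto)
  qed
qed

lemma bigo_power_nhds_zero: "m \<le> n \<Longrightarrow> (\<lambda>x::real. x ^ n) \<in> O[nhds 0](\<lambda>x. x ^ m)"
proof (rule bigoI[where c = 1])
  assume "m \<le> n"
  have "((\<lambda>x::real. \<bar>x\<bar>) \<longlongrightarrow> \<bar>0\<bar>) (nhds 0)" by (intro tendsto_intros filterlim_ident)
  then have "\<forall>\<^sub>F x in nhds 0. \<bar>x::real\<bar> < 1" by (intro order_tendstoD(2)) auto
  then show "\<forall>\<^sub>F x in nhds 0. norm (x ^ n) \<le> 1 * norm ((x::real) ^ m)"
  proof eventually_elim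
    case (elim x)
    then have "\<bar>x\<bar> ^ n \<le> \<bar>x\<bar> ^ m" using \<open>m \<le> n\<close> by (intro power_decreasing) auto
    then show ?case by (simp only: norm_power real_norm_def mult_1_left power_abs)
  qed
qed

section \<open>Routing terms and the characteristic function\<close>

lemma tanh_half_diff_eq: "tanh ((p - q) / 2) = (exp p - exp q) / (exp p + exp (q::real))"
proof -
  have pos: "0 < exp p" by simp
  have "exp (- 2 * ((p - q) / 2)) = exp q / exp p"
    by (simp add: exp_diff[symmetric])
  then have "tanh ((p - q) / 2) = (1 - exp q / exp p) / (1 + exp q / exp p)"
    by (simp only: tanh_real_altdef)
  moreover have "1 - exp q / exp p = (exp p - exp q) / exp p" "1 + exp q / exp p = (exp p + exp q) / exp p"
    using pos by (simp_all add: field_simps)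
  ultimately show ?thesis using pos by simp
qed

definition routing_imbalance :: "real \<Rightarrow> real \<Rightarrow> real \<Rightarrow> real \<Rightarrow> real \<Rightarrow> real" where
  "routing_imbalance th alh eps x y = (eps * alh - th * (x - y)) / 2"

lemma F1_eq_tanh: "F1 lam th al alh eps x y = lam * (1 + tanh (routing_imbalance th alh eps x y)) / 2"
  and F2_eq_tanh: "F2 lam th al alh eps x y = lam * (1 - tanh (routing_imbalance th alh eps x y)) / 2"
proof -
  define p q where "p = - th * x + (al + eps * alh)" and "q = - th * y + al"
  have imbalance: "routing_imbalance th alh eps x y = (p - q) / 2"
    by (simp add: routing_imbalance_def p_def q_def algebra_simps)
  have "0 < exp p + exp q" by (simp add: add_pos_pos)
  then show "F1 lam th al alh eps x y = lam * (1 + tanh (routing_imbalance th alh eps x y)) / 2"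
    and "F2 lam th al alh eps x y = lam * (1 - tanh (routing_imbalance th alh eps x y)) / 2"
    unfolding F1_def F2_def p_def[symmetric] q_def[symmetric] imbalance tanh_half_diff_eq
    by (simp_all add: field_simps)
qed

definition char_gain :: "real \<Rightarrow> real \<Rightarrow> real \<Rightarrow> real \<Rightarrow> real \<Rightarrow> real \<Rightarrow> real" where
  "char_gain lam th alh eps x y = lam * th * (1 - (tanh (routing_imbalance th alh eps x y))\<^sup>2) / 2"

lemma deriv_F1_fst: "deriv (\<lambda>z. F1 lam th al alh eps z y) x = - char_gain lam th alh eps x y / 2"
  and deriv_F1_snd: "deriv (\<lambda>z. F1 lam th al alh eps x z) y = char_gain lam th alh eps x y / 2"
  and deriv_F2_fst: "deriv (\<lambda>z. F2 lam th al alh eps z y) x = char_gain lam th alh eps x y / 2"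
  and deriv_F2_snd: "deriv (\<lambda>z. F2 lam th al alh eps x z) y = - char_gain lam th alh eps x y / 2"
  unfolding F1_eq_tanh F2_eq_tanh char_gain_def routing_imbalance_def
  by (safe intro!: DERIV_imp_deriv) (auto intro!: derivative_eq_intros simp: field_simps)

text \<open>The Jacobian of (F1, F2) at (x, y) is char_gain/2 times [[-1, 1], [1, -1]], so the total
  queue length decouples with root -mu and the difference obeys a scalar delay equation.\<close>

lemma char_fun_eq:
  "char_fun lam mu th al alh eps x y D s =
     (s + of_real mu) * (s + of_real mu + of_real (char_gain lam th alh eps x y) * exp (- s * of_real D))"
  unfolding char_fun_def Let_def deriv_F1_fst deriv_F1_snd deriv_F2_fst deriv_F2_snd
  by (simp add: algebra_simps power2_eq_square)

section \<open>The scalar delay equation\<close>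

text \<open>For gain K > mu, the equation s + mu + K e^(-s D) = 0 first acquires a purely imaginary root,
  at frequency sqrt (K^2 - mu^2), when D reaches this value; for K = lam th / 2 it is the paper's
  Delta_cr.\<close>

definition critical_delay :: "real \<Rightarrow> real \<Rightarrow> real" where
  "critical_delay mu K = arccos (- mu / K) / sqrt (K\<^sup>2 - mu\<^sup>2)"

lemma delay_char_eq_zero_iff:
  "s + of_real mu + of_real K * exp (- s * of_real D) = 0 \<longleftrightarrow>
     Re s + mu + K * exp (- Re s * D) * cos (Im s * D) = 0 \<and> Im s = K * exp (- Re s * D) * sin (Im s * D)"
  by (simp add: complex_eq_iff Re_exp Im_exp algebra_simps)

lemma delay_char_root_nonneg_Re:
  assumes mu: "0 < mu" and K: "mu < K" and D: "0 < D" and Re: "0 \<le> Re s"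
    and root: "s + of_real mu + of_real K * exp (- s * of_real D) = 0"
  shows "\<bar>Im s\<bar> \<le> sqrt (K\<^sup>2 - mu\<^sup>2)" and "cos (\<bar>Im s\<bar> * D) \<le> - mu / K"
proof -
  define a b m where "a = Re s" and "b = Im s" and "m = K * exp (- a * D)"
  have re: "a + mu = - m * cos (b * D)" and im: "b = m * sin (b * D)"
    using root unfolding delay_char_eq_zero_iff a_def b_def m_def by (auto simp: algebra_simps)
  have m: "0 < m" "m \<le> K" using K mu Re D by (simp_all add: m_def a_def)
  have circle: "(a + mu)\<^sup>2 + b\<^sup>2 = m\<^sup>2"
    by (subst re, subst (2) im) (simp add: power_mult_distrib flip: distrib_left)
  have "mu\<^sup>2 \<le> (a + mu)\<^sup>2" "m\<^sup>2 \<le> K\<^sup>2" using Re mu m by (simp_all add: a_def power_mono)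
  then have "b\<^sup>2 \<le> K\<^sup>2 - mu\<^sup>2" using circle by linarith
  then show "\<bar>Im s\<bar> \<le> sqrt (K\<^sup>2 - mu\<^sup>2)" unfolding b_def by (metis real_sqrt_abs real_sqrt_le_mono)
  have "cos (\<bar>b\<bar> * D) = - ((a + mu) / m)" using re m by (simp add: abs_if field_simps)
  also have "\<dots> \<le> - mu / K"
  proof -
    have "mu / K \<le> mu / m" using m mu by (simp add: frac_le)
    also have "\<dots> \<le> (a + mu) / m" using Re m by (simp add: a_def divide_right_mono)
    finally show ?thesis by simp
  qed
  finally show "cos (\<bar>Im s\<bar> * D) \<le> - mu / K" by (simp add: b_def)
qed

lemma delay_char_root_Re_neg:
  assumes mu: "0 < mu" and K: "mu < K" and D: "0 < D" "D < critical_delay mu K"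
    and root: "s + of_real mu + of_real K * exp (- s * of_real D) = 0"
  shows "Re s < 0"
proof (rule ccontr)
  assume "\<not> Re s < 0"
  then have "0 \<le> Re s" by simp
  note freq = delay_char_root_nonneg_Re(1)[OF mu K D(1) this root]
    and cos_le = delay_char_root_nonneg_Re(2)[OF mu K D(1) this root]
  have bounded: "-1 \<le> - mu / K" "- mu / K \<le> 1" using mu K by (simp_all add: field_simps)
  have phase: "arccos (- mu / K) \<le> \<bar>Im s\<bar> * D"
  proof (cases "\<bar>Im s\<bar> * D \<le> pi")
    case True
    have "arccos (- mu / K) \<le> arccos (cos (\<bar>Im s\<bar> * D))"
      using cos_le bounded by (intro arccos_le_arccos) auto
    also have "\<dots> = \<bar>Im s\<bar> * D" using True D by (simp add: arccos_cos)
    finally show ?thesis .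
  next
    case False
    then show ?thesis using arccos_bounded[OF bounded] by linarith
  qed
  have "0 < sqrt (K\<^sup>2 - mu\<^sup>2)" using mu K by (simp add: power_strict_mono)
  then have "sqrt (K\<^sup>2 - mu\<^sup>2) * D < arccos (- mu / K)"
    using D by (simp add: critical_delay_def field_simps)
  moreover have "\<bar>Im s\<bar> * D \<le> sqrt (K\<^sup>2 - mu\<^sup>2) * D" using freq D by (simp add: mult_right_mono)
  ultimately show False using phase by linarith
qed

lemma delay_char_root_of_phase:
  assumes D: "0 < D" and K: "0 < K"
    and v: "v = - (a + mu) * exp (a * D) / K" "\<bar>v\<bar> \<le> 1"
    and phase: "D * K * exp (- a * D) * sqrt (1 - v\<^sup>2) = arccos v"
  shows "Complex a (arccos v / D) + of_real mu + of_real K * exp (- Complex a (arccos v / D) * of_real D) = 0"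
proof -
  define b where "b = arccos v / D"
  have bD: "b * D = arccos v" using D by (simp add: b_def)
  have "K * exp (- a * D) * v = - (a + mu)"
    using v(1) K by (simp add: exp_minus field_simps)
  then have "a + mu + K * exp (- a * D) * cos (b * D) = 0"
    unfolding bD using v(2) by (simp add: cos_arccos_abs)
  moreover have "b = K * exp (- a * D) * sin (b * D)"
    unfolding bD sin_arccos_abs[OF v(2)] using phase D by (simp add: b_def field_simps)
  ultimately show ?thesis unfolding b_def[symmetric] delay_char_eq_zero_iff by simp
qed

lemma critical_delay_nonneg: "0 < mu \<Longrightarrow> mu < K \<Longrightarrow> 0 \<le> critical_delay mu K"
  unfolding critical_delay_def by (intro divide_nonneg_nonneg arccos_lbound) (auto simp: field_simps)

lemma ex_growth_rate:
  fixes mu K D :: real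
  assumes mu: "0 < mu" and K: "mu < K" and D: "0 < D"
  obtains a where "0 < a" "(a + mu) * exp (a * D) = K"
proof -
  define h where "h a = (a + mu) * exp (a * D)" for a
  have "K + mu \<le> (K + mu) * exp (K * D)" using K mu D by simp
  then have "K \<le> h K" using mu unfolding h_def by linarith
  moreover have "h 0 \<le> K" using K by (simp add: h_def)
  moreover have "continuous_on {0..K} h" unfolding h_def by (intro continuous_intros)
  ultimately obtain a where "0 \<le> a" "h a = K" using IVT'[of h 0 K K] K mu by auto
  moreover have "a \<noteq> 0" using \<open>h a = K\<close> K by (auto simp: h_def)
  ultimately show ?thesis using that[of a] by (simp add: h_def)
qed

text \<open>A root Complex a b with a \<ge> 0 needs (a + mu) e^(a D) \<le> K and cos (b D) = v a; the
  remaining phase condition is G a = 0, and G changes sign on [0, a1].\<close>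

lemma delay_char_root_Re_pos_exists:
  assumes mu: "0 < mu" and K: "mu < K" and D: "critical_delay mu K < D"
  shows "\<exists>s. 0 < Re s \<and> s + of_real mu + of_real K * exp (- s * of_real D) = 0"
proof -
  have D0: "0 < D" using critical_delay_nonneg[OF mu K] D by linarith
  obtain a1 where "0 < a1" and a1: "(a1 + mu) * exp (a1 * D) = K" using ex_growth_rate[OF mu K D0] .
  define h where "h a = (a + mu) * exp (a * D)" for a
  have h_mono: "h a \<le> h a'" if "0 \<le> a" "a \<le> a'" for a a'
    using that mu D0 unfolding h_def by (intro mult_mono) auto
  define v where "v a = - h a / K" for a
  have v_bounded: "\<bar>v a\<bar> \<le> 1" if "0 \<le> a" "a \<le> a1" for a
  proof -
    have "0 \<le> h a" using that mu by (simp add: h_def)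
    moreover have "h a \<le> K" using h_mono[OF that] a1 by (simp add: h_def)
    ultimately show ?thesis using mu K by (simp add: v_def)
  qed
  define G where "G a = D * K * exp (- a * D) * sqrt (1 - (v a)\<^sup>2) - arccos (v a)" for a
  have "continuous_on {0..a1} v" unfolding v_def h_def using mu K by (intro continuous_intros) auto
  then have "continuous_on {0..a1} (\<lambda>a. - G a)"
    unfolding G_def using v_bounded by (intro continuous_intros) (auto simp: abs_le_iff)
  moreover have "G a1 < 0" using a1 K mu by (simp add: G_def v_def h_def)
  moreover have "0 < G 0"
  proof -
    have "1 - (mu / K)\<^sup>2 = (K\<^sup>2 - mu\<^sup>2) / K\<^sup>2" using mu K by (simp add: field_simps)
    then have "K * sqrt (1 - (mu / K)\<^sup>2) = sqrt (K\<^sup>2 - mu\<^sup>2)"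
      using mu K by (simp add: real_sqrt_divide)
    moreover have "arccos (- mu / K) < D * sqrt (K\<^sup>2 - mu\<^sup>2)"
      using D mu K by (simp add: critical_delay_def divide_less_eq power_strict_mono mult.commute)
    ultimately show ?thesis by (simp add: G_def v_def h_def mult.assoc)
  qed
  ultimately obtain a where a: "0 \<le> a" "a \<le> a1" "G a = 0"
    using IVT'[of "\<lambda>a. - G a" 0 0 a1] \<open>0 < a1\<close> by auto
  have "0 < a" using a \<open>0 < G 0\<close> by (cases "a = 0") auto
  have phase: "D * K * exp (- a * D) * sqrt (1 - (v a)\<^sup>2) = arccos (v a)"
    using a(3) by (simp add: G_def)
  have "v a = - (a + mu) * exp (a * D) / K" by (simp add: v_def h_def field_simps)
  from delay_char_root_of_phase[OF D0 _ this v_bounded[OF a(1,2)] phase]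
  have "Complex a (arccos (v a) / D) + of_real mu
          + of_real K * exp (- Complex a (arccos (v a) / D) * of_real D) = 0"
    using mu K by simp
  with \<open>0 < a\<close> show ?thesis by (intro exI[of _ "Complex a (arccos (v a) / D)"]) simp
qed

definition critical_delay_deriv :: "real \<Rightarrow> real \<Rightarrow> real" where
  "critical_delay_deriv mu K = - (mu / K + K * critical_delay mu K) / (K\<^sup>2 - mu\<^sup>2)"

lemma has_real_derivative_critical_delay:
  assumes mu: "0 < mu" and K: "mu < K"
  shows "(critical_delay mu has_real_derivative critical_delay_deriv mu K) (at K)"
proof -
  define W where "W = sqrt (K\<^sup>2 - mu\<^sup>2)"
  have W: "0 < W" "W\<^sup>2 = K\<^sup>2 - mu\<^sup>2" using mu K by (simp_all add: W_def power_strict_mono)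
  have "1 - (- mu / K)\<^sup>2 = (K\<^sup>2 - mu\<^sup>2) / K\<^sup>2" using mu K by (simp add: field_simps)
  then have sqrt_eq: "sqrt (1 - (- mu / K)\<^sup>2) = W / K" using mu K by (simp add: W_def real_sqrt_divide)
  have "((\<lambda>K. arccos (- mu / K)) has_real_derivative inverse (- sqrt (1 - (- mu / K)\<^sup>2)) * (mu / K\<^sup>2)) (at K)"
    using mu K by (auto intro!: derivative_eq_intros simp: field_simps power2_eq_square)
  moreover have "inverse (- sqrt (1 - (- mu / K)\<^sup>2)) * (mu / K\<^sup>2) = - mu / (K * W)"
    unfolding sqrt_eq using mu K W by (simp add: field_simps power2_eq_square)
  ultimately have arccos': "((\<lambda>K. arccos (- mu / K)) has_real_derivative - mu / (K * W)) (at K)"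
    by simp
  have sqrt': "((\<lambda>K. sqrt (K\<^sup>2 - mu\<^sup>2)) has_real_derivative K / W) (at K)"
    using W by (auto intro!: derivative_eq_intros simp: W_def field_simps)
  have "((\<lambda>K. arccos (- mu / K) / sqrt (K\<^sup>2 - mu\<^sup>2)) has_real_derivative
          (- mu / (K * W) * sqrt (K\<^sup>2 - mu\<^sup>2) - arccos (- mu / K) * (K / W))
            / (sqrt (K\<^sup>2 - mu\<^sup>2) * sqrt (K\<^sup>2 - mu\<^sup>2))) (at K)"
    by (rule DERIV_divide[OF arccos' sqrt']) (use W in \<open>simp add: W_def\<close>)
  moreover have "(- mu / (K * W) * sqrt (K\<^sup>2 - mu\<^sup>2) - arccos (- mu / K) * (K / W))
            / (sqrt (K\<^sup>2 - mu\<^sup>2) * sqrt (K\<^sup>2 - mu\<^sup>2)) = critical_delay_deriv mu K"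
    unfolding critical_delay_deriv_def critical_delay_def W_def[symmetric] W(2)[symmetric]
    using W mu K by (simp add: field_simps power2_eq_square)
  ultimately show ?thesis unfolding critical_delay_def[abs_def] by simp
qed

lemma critical_delay_remainder_bound:
  assumes mu: "0 < mu" and K1: "mu < K1"
  obtains M where "0 \<le> M" "\<And>K. K \<in> {K1..K0} \<Longrightarrow>
    \<bar>critical_delay mu K - critical_delay mu K0 - critical_delay_deriv mu K0 * (K - K0)\<bar> \<le> M * (K - K0)\<^sup>2"
proof -
  have K: "mu < K" if "K \<in> {K1..K0}" for K using that K1 by auto
  define f'' where "f'' K =
    (- (- mu / K\<^sup>2 + critical_delay mu K + K * critical_delay_deriv mu K) * (K\<^sup>2 - mu\<^sup>2)
       - - (mu / K + K * critical_delay mu K) * (2 * K)) / ((K\<^sup>2 - mu\<^sup>2) * (K\<^sup>2 - mu\<^sup>2))" for K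
  have d1: "(critical_delay mu has_real_derivative critical_delay_deriv mu K) (at K)"
    if "K \<in> {K1..K0}" for K
    using has_real_derivative_critical_delay[OF mu K[OF that]] .
  have d2: "(critical_delay_deriv mu has_real_derivative f'' K) (at K)" if "K \<in> {K1..K0}" for K
  proof -
    have "mu < K" "K \<noteq> 0" "K\<^sup>2 - mu\<^sup>2 \<noteq> 0" using K[OF that] mu by (auto simp: power_strict_mono)
    then have "((\<lambda>K. - (mu / K + K * critical_delay mu K)) has_real_derivative
                 - (- mu / K\<^sup>2 + critical_delay mu K + K * critical_delay_deriv mu K)) (at K)"
      by (auto intro!: derivative_eq_intros has_real_derivative_critical_delay[OF mu]
          simp: field_simps power2_eq_square)
    moreover have "((\<lambda>K. K\<^sup>2 - mu\<^sup>2) has_real_derivative 2 * K) (at K)"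
      by (auto intro!: derivative_eq_intros)
    ultimately have "((\<lambda>K. - (mu / K + K * critical_delay mu K) / (K\<^sup>2 - mu\<^sup>2)) has_real_derivative f'' K) (at K)"
      unfolding f''_def using \<open>K\<^sup>2 - mu\<^sup>2 \<noteq> 0\<close> by (rule DERIV_divide)
    then show ?thesis unfolding critical_delay_deriv_def[abs_def] .
  qed
  have "continuous_on {K1..K0} (critical_delay mu)" "continuous_on {K1..K0} (critical_delay_deriv mu)"
    using DERIV_isCont[OF d1] DERIV_isCont[OF d2] by (auto intro!: continuous_at_imp_continuous_on)
  moreover have "K \<noteq> 0" "(K\<^sup>2 - mu\<^sup>2) * (K\<^sup>2 - mu\<^sup>2) \<noteq> 0" if "K \<in> {K1..K0}" for K
    using K[OF that] mu by (auto simp: power_strict_mono)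
  ultimately have "continuous_on {K1..K0} f''"
    unfolding f''_def by (intro continuous_intros) auto
  with d1 d2 show ?thesis using taylor_remainder_bound that by blast
qed

section \<open>Equilibria\<close>

lemma ex1_offset_equation: "0 \<le> A \<Longrightarrow> \<exists>!u. 2 * u + A * tanh u = (c::real)"
proof -
  assume A: "0 \<le> A"
  define g where "g u = 2 * u + A * tanh u" for u
  have g_less: "g u < g v" if "u < v" for u v
    using that A mult_left_mono[of "tanh u" "tanh v" A] by (simp add: g_def)
  have "0 \<le> A * tanh \<bar>c\<bar>" using A by simp
  then have "g (- \<bar>c\<bar>) \<le> c" "c \<le> g \<bar>c\<bar>" by (simp_all add: g_def)
  moreover have "continuous_on {- \<bar>c\<bar>..\<bar>c\<bar>} g" unfolding g_def by (intro continuous_intros) auto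
  ultimately obtain u where "g u = c" using IVT'[of g "- \<bar>c\<bar>" c "\<bar>c\<bar>"] by auto
  moreover have "v = u" if "g v = c" for v
    using g_less[of u v] g_less[of v u] that \<open>g u = c\<close> by (cases u v rule: linorder_cases) auto
  ultimately show ?thesis unfolding g_def by blast
qed

text \<open>At an equilibrium the routing imbalance u solves 2 u + (lam th / mu) tanh u = eps alh.
  For A < 0 the solution need not be unique and THE yields an unspecified value.\<close>

definition equilibrium_offset :: "real \<Rightarrow> real \<Rightarrow> real" where
  "equilibrium_offset A c = (THE u. 2 * u + A * tanh u = c)"

lemma equilibrium_offset_eq: "0 \<le> A \<Longrightarrow> 2 * equilibrium_offset A c + A * tanh (equilibrium_offset A c) = c"
  unfolding equilibrium_offset_def by (rule theI'[OF ex1_offset_equation])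

lemma equilibrium_offset_unique: "0 \<le> A \<Longrightarrow> 2 * u + A * tanh u = c \<Longrightarrow> equilibrium_offset A c = u"
  unfolding equilibrium_offset_def by (rule the1_equality[OF ex1_offset_equation])

lemma offset_equation_abs_le:
  fixes A u c :: real
  assumes "0 \<le> A" and "2 * u + A * tanh u = c"
  shows "\<bar>u\<bar> \<le> \<bar>c\<bar> / 2"
proof (cases "0 \<le> u")
  case True
  then have "0 \<le> A * tanh u" using assms(1) by simp
  then show ?thesis using assms(2) True by linarith
next
  case False
  then have "A * tanh u \<le> 0" using assms(1) by (simp add: mult_nonneg_nonpos)
  then show ?thesis using assms(2) False by linarith
qed

lemma offset_equation_tanh_sq_approx:
  fixes A u c :: real
  assumes A: "0 \<le> A" and eq: "2 * u + A * tanh u = c"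
  shows "\<bar>(tanh u)\<^sup>2 - (c / (2 + A))\<^sup>2\<bar> \<le> \<bar>c\<bar> ^ 4"
proof -
  have u: "\<bar>u\<bar> \<le> \<bar>c\<bar> / 2" by (rule offset_equation_abs_le[OF assms])
  have "tanh u - c / (2 + A) = 2 * (tanh u - u) / (2 + A)"
    using eq A by (simp add: field_simps)
  then have "\<bar>tanh u - c / (2 + A)\<bar> = 2 * \<bar>tanh u - u\<bar> / (2 + A)"
    using A by (simp only: abs_divide abs_mult abs_numeral)
  also have "\<dots> \<le> 2 * \<bar>tanh u - u\<bar> / 2" using A by (intro divide_left_mono) auto
  also have "\<dots> \<le> \<bar>u\<bar> ^ 3 / 3" using abs_diff_tanh_real_le_cube[of u] by (simp add: abs_minus_commute)
  also have "\<dots> \<le> \<bar>c\<bar> ^ 3"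
  proof -
    have "\<bar>u\<bar> ^ 3 \<le> \<bar>c\<bar> ^ 3 / 8" using power_mono[OF u, of 3] by (simp add: power_divide)
    moreover have "0 \<le> \<bar>u\<bar> ^ 3" by simp
    ultimately show ?thesis by linarith
  qed
  finally have diff: "\<bar>tanh u - c / (2 + A)\<bar> \<le> \<bar>c\<bar> ^ 3" .
  have "\<bar>c / (2 + A)\<bar> = \<bar>c\<bar> / (2 + A)" using A by simp
  also have "\<dots> \<le> \<bar>c\<bar> / 2" using A by (intro divide_left_mono) auto
  finally have "\<bar>c / (2 + A)\<bar> \<le> \<bar>c\<bar> / 2" .
  then have sum: "\<bar>tanh u + c / (2 + A)\<bar> \<le> \<bar>c\<bar>" using abs_tanh_real_le[of u] u by linarith
  have "\<bar>(tanh u)\<^sup>2 - (c / (2 + A))\<^sup>2\<bar> = \<bar>tanh u - c / (2 + A)\<bar> * \<bar>tanh u + c / (2 + A)\<bar>"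
    by (simp add: power2_eq_square algebra_simps flip: abs_mult)
  also have "\<dots> \<le> \<bar>c\<bar> ^ 3 * \<bar>c\<bar>" using diff sum by (intro mult_mono) auto
  finally show ?thesis by (simp add: power_Suc2[of _ 3, symmetric])
qed

lemma tanh_equilibrium_offset_sq_le: "0 \<le> A \<Longrightarrow> (tanh (equilibrium_offset A c))\<^sup>2 \<le> c\<^sup>2 / 4"
proof -
  assume A: "0 \<le> A"
  have "\<bar>tanh (equilibrium_offset A c)\<bar> \<le> \<bar>c\<bar> / 2"
    using abs_tanh_real_le offset_equation_abs_le[OF A equilibrium_offset_eq[OF A]] order_trans by blast
  from power_mono[OF this, of 2] show ?thesis by (simp add: power_divide)
qed

lemma is_equilibrium_imbalance:
  assumes mu: "0 < mu" and "0 \<le> lam * th" and eq: "is_equilibrium lam mu th al alh eps x y"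
  shows "routing_imbalance th alh eps x y = equilibrium_offset (lam * th / mu) (eps * alh)"
proof -
  define u where "u = routing_imbalance th alh eps x y"
  have diff: "mu * (x - y) = lam * tanh u"
    using eq unfolding is_equilibrium_def F1_eq_tanh F2_eq_tanh u_def[symmetric] by (simp add: algebra_simps)
  have "lam * th / mu * tanh u = th * (lam * tanh u) / mu" by simp
  also have "\<dots> = th * (x - y)" unfolding diff[symmetric] using mu by simp
  finally have "lam * th / mu * tanh u = th * (x - y)" .
  moreover have "2 * u = eps * alh - th * (x - y)" by (simp add: u_def routing_imbalance_def)
  ultimately have "2 * u + lam * th / mu * tanh u = eps * alh" by simp
  then show ?thesis unfolding u_def[symmetric] using assms by (intro equilibrium_offset_unique[symmetric]) auto
qed

lemma ex_equilibrium:
  assumes mu: "0 < mu" and "0 \<le> lam * th"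
  shows "\<exists>x y. is_equilibrium lam mu th al alh eps x y"
proof -
  define u where "u = equilibrium_offset (lam * th / mu) (eps * alh)"
  define x y where "x = lam * (1 + tanh u) / (2 * mu)" and "y = lam * (1 - tanh u) / (2 * mu)"
  have "2 * u + lam * th / mu * tanh u = eps * alh"
    unfolding u_def using assms by (intro equilibrium_offset_eq) auto
  then have "routing_imbalance th alh eps x y = u"
    using mu by (simp add: routing_imbalance_def x_def y_def field_simps)
  then have "is_equilibrium lam mu th al alh eps x y"
    using mu by (simp add: is_equilibrium_def F1_eq_tanh F2_eq_tanh x_def y_def)
  then show ?thesis by blast
qed

definition equilibrium_gain :: "real \<Rightarrow> real \<Rightarrow> real \<Rightarrow> real" where
  "equilibrium_gain K0 A c = K0 * (1 - (tanh (equilibrium_offset A c))\<^sup>2)"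

lemma char_gain_at_equilibrium:
  assumes "0 < mu" and "0 \<le> lam * th" and "is_equilibrium lam mu th al alh eps x y"
  shows "char_gain lam th alh eps x y = equilibrium_gain (lam * th / 2) (lam * th / mu) (eps * alh)"
  using is_equilibrium_imbalance[OF assms] by (simp add: char_gain_def equilibrium_gain_def)

lemma eventually_equilibrium_gain_gt:
  assumes "0 \<le> A" "0 \<le> K0" "k < K0"
  shows "\<forall>\<^sub>F c in nhds 0. k < equilibrium_gain K0 A c"
proof -
  have "((\<lambda>c. K0 * (1 - c\<^sup>2 / 4)) \<longlongrightarrow> K0 * (1 - 0\<^sup>2 / 4)) (nhds 0)"
    by (intro tendsto_intros filterlim_ident) auto
  then have "\<forall>\<^sub>F c in nhds 0. k < K0 * (1 - c\<^sup>2 / 4)" using assms(3) by (intro order_tendstoD(1)) auto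
  moreover have "K0 * (1 - c\<^sup>2 / 4) \<le> equilibrium_gain K0 A c" for c
    using tanh_equilibrium_offset_sq_le[OF assms(1), of c] assms(2)
    unfolding equilibrium_gain_def by (intro mult_left_mono) auto
  ultimately show ?thesis by (elim eventually_mono) (rule less_le_trans)
qed

section \<open>Stability switch and expansion of the critical delay\<close>

lemma lin_stable_below_critical_delay:
  fixes lam mu th al alh eps D K :: real
  defines "K \<equiv> equilibrium_gain (lam * th / 2) (lam * th / mu) (eps * alh)"
  assumes mu: "0 < mu" and "0 \<le> lam * th" and "mu < K"
    and D: "0 < D" "D < critical_delay mu K"
  shows "lin_stable lam mu th al alh eps D"
  unfolding lin_stable_def
proof (intro allI impI)
  fix x y s
  assume "is_equilibrium lam mu th al alh eps x y" and "char_fun lam mu th al alh eps x y D s = 0"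
  then have "s + of_real mu = 0 \<or> s + of_real mu + of_real K * exp (- s * of_real D) = 0"
    using char_gain_at_equilibrium[OF mu \<open>0 \<le> lam * th\<close>] by (simp add: char_fun_eq K_def)
  then show "Re s < 0"
  proof
    assume "s + of_real mu = 0"
    then have "s = - of_real mu" by (simp add: add_eq_0_iff)
    then show ?thesis using mu by simp
  qed (use delay_char_root_Re_neg[OF mu \<open>mu < K\<close> D] in blast)
qed

lemma lin_unstable_above_critical_delay:
  fixes lam mu th al alh eps D K :: real
  defines "K \<equiv> equilibrium_gain (lam * th / 2) (lam * th / mu) (eps * alh)"
  assumes mu: "0 < mu" and "0 \<le> lam * th" and "mu < K" and D: "critical_delay mu K < D"
  shows "lin_unstable lam mu th al alh eps D"
proof -
  obtain x y where eq: "is_equilibrium lam mu th al alh eps x y"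
    using ex_equilibrium[OF mu \<open>0 \<le> lam * th\<close>] by blast
  obtain s where "0 < Re s" "s + of_real mu + of_real K * exp (- s * of_real D) = 0"
    using delay_char_root_Re_pos_exists[OF mu \<open>mu < K\<close> D] by blast
  then have "char_fun lam mu th al alh eps x y D s = 0"
    using char_gain_at_equilibrium[OF mu \<open>0 \<le> lam * th\<close> eq] by (simp add: char_fun_eq K_def)
  with eq \<open>0 < Re s\<close> show ?thesis unfolding lin_unstable_def by blast
qed

definition modified_critical_delay :: "real \<Rightarrow> real \<Rightarrow> real \<Rightarrow> real \<Rightarrow> real \<Rightarrow> real" where
  "modified_critical_delay lam mu th alh eps =
     critical_delay mu (equilibrium_gain (lam * th / 2) (lam * th / mu) (eps * alh))"

lemma eventually_stability_switch:
  fixes lam mu th al alh :: real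
  assumes mu: "0 < mu" and gain: "2 * mu < lam * th"
  shows "\<forall>\<^sub>F eps in nhds 0.
     (\<forall>D. 0 < D \<and> D < modified_critical_delay lam mu th alh eps \<longrightarrow> lin_stable lam mu th al alh eps D) \<and>
     (\<forall>D. modified_critical_delay lam mu th alh eps < D \<longrightarrow> lin_unstable lam mu th al alh eps D)"
proof -
  have "0 \<le> lam * th" "0 \<le> lam * th / mu" "0 \<le> lam * th / 2" "mu < lam * th / 2"
    using mu gain by simp_all
  have "((\<lambda>eps. eps * alh) \<longlongrightarrow> 0 * alh) (nhds 0)" by (intro tendsto_intros filterlim_ident)
  then have "\<forall>\<^sub>F eps in nhds 0. mu < equilibrium_gain (lam * th / 2) (lam * th / mu) (eps * alh)"
    using eventually_compose_filterlim[OF eventually_equilibrium_gain_gt[OF \<open>0 \<le> lam * th / mu\<close>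
        \<open>0 \<le> lam * th / 2\<close> \<open>mu < lam * th / 2\<close>]] by simp
  then show ?thesis
    unfolding modified_critical_delay_def
    by eventually_elim
       (use lin_stable_below_critical_delay[OF mu \<open>0 \<le> lam * th\<close>]
          lin_unstable_above_critical_delay[OF mu \<open>0 \<le> lam * th\<close>] in blast)
qed

lemma critical_delay_equilibrium_gain_remainder:
  assumes mu: "0 < mu" and K0: "mu < K0" and A: "0 \<le> A"
  shows "(\<lambda>c. critical_delay mu (equilibrium_gain K0 A c) - critical_delay mu K0
            - critical_delay_deriv mu K0 * (equilibrium_gain K0 A c - K0)) \<in> O[nhds 0](\<lambda>c. c ^ 4)"
proof -
  define K where "K c = equilibrium_gain K0 A c" for c
  define K1 where "K1 = (mu + K0) / 2"
  have "mu < K1" "K1 < K0" using K0 by (simp_all add: K1_def)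
  obtain M where "0 \<le> M" and M: "\<And>k. k \<in> {K1..K0} \<Longrightarrow>
      \<bar>critical_delay mu k - critical_delay mu K0 - critical_delay_deriv mu K0 * (k - K0)\<bar> \<le> M * (k - K0)\<^sup>2"
    using critical_delay_remainder_bound[OF mu \<open>mu < K1\<close>] by blast
  have "\<bar>critical_delay mu (K c) - critical_delay mu K0 - critical_delay_deriv mu K0 * (K c - K0)\<bar>
      \<le> M * K0\<^sup>2 / 16 * \<bar>c ^ 4\<bar>" if "K1 < K c" for c
  proof -
    define t where "t = tanh (equilibrium_offset A c)"
    have K_minus: "K c - K0 = - K0 * t\<^sup>2" by (simp add: K_def t_def equilibrium_gain_def algebra_simps)
    have "0 \<le> K0 * t\<^sup>2" using K0 mu by simp
    then have "K c \<le> K0" using K_minus by linarith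
    then have "\<bar>critical_delay mu (K c) - critical_delay mu K0 - critical_delay_deriv mu K0 * (K c - K0)\<bar>
        \<le> M * (K c - K0)\<^sup>2" using M that by simp
    also have "(K c - K0)\<^sup>2 = K0\<^sup>2 * (t\<^sup>2)\<^sup>2" by (simp add: K_minus power_mult_distrib)
    also have "\<dots> \<le> K0\<^sup>2 * (c\<^sup>2 / 4)\<^sup>2"
      using tanh_equilibrium_offset_sq_le[OF A, of c] by (intro mult_left_mono power_mono) (auto simp: t_def)
    finally show ?thesis using \<open>0 \<le> M\<close> by (simp add: power_divide mult_left_mono)
  qed
  with eventually_equilibrium_gain_gt[OF A _ \<open>K1 < K0\<close>] K0 mu
  have "\<forall>\<^sub>F c in nhds 0. norm (critical_delay mu (K c) - critical_delay mu K0
      - critical_delay_deriv mu K0 * (K c - K0)) \<le> M * K0\<^sup>2 / 16 * norm (c ^ 4)"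
    unfolding K_def by (auto elim!: eventually_mono)
  then show ?thesis unfolding K_def by (rule bigoI)
qed

text \<open>Since K - K0 = - K0 tanh^2 u and tanh^2 u = (c / (2 + A))^2 + O(c^4), the first-order Taylor
  term of the critical delay gives the c^2 coefficient and the second-order remainder is O(c^4).\<close>

lemma critical_delay_equilibrium_gain_expansion:
  assumes mu: "0 < mu" and K0: "mu < K0" and A: "0 \<le> A"
  shows "(\<lambda>c. critical_delay mu (equilibrium_gain K0 A c) - critical_delay mu K0
            + critical_delay_deriv mu K0 * K0 * (c / (2 + A))\<^sup>2) \<in> O[nhds 0](\<lambda>c. c ^ 3)"
proof -
  define K t where "K c = equilibrium_gain K0 A c" and "t c = tanh (equilibrium_offset A c)" for c
  have "(\<lambda>c. critical_delay mu (K c) - critical_delay mu K0 - critical_delay_deriv mu K0 * (K c - K0))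
      \<in> O[nhds 0](\<lambda>c. c ^ 4)"
    unfolding K_def by (rule critical_delay_equilibrium_gain_remainder[OF mu K0 A])
  moreover have "(\<lambda>c. (c / (2 + A))\<^sup>2 - (t c)\<^sup>2) \<in> O[nhds 0](\<lambda>c. c ^ 4)"
    using offset_equation_tanh_sq_approx[OF A equilibrium_offset_eq[OF A]]
    by (intro bigoI[where c = 1] always_eventually allI) (simp add: t_def abs_minus_commute power_abs)
  ultimately have bigo: "(\<lambda>c. (critical_delay mu (K c) - critical_delay mu K0 - critical_delay_deriv mu K0 * (K c - K0))
      + critical_delay_deriv mu K0 * K0 * ((c / (2 + A))\<^sup>2 - (t c)\<^sup>2)) \<in> O[nhds 0](\<lambda>c. c ^ 3)"
    using landau_o.big.trans[OF _ bigo_power_nhds_zero[of 3 4]] by (intro sum_in_bigo(1)) auto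
  have rearrange: "(critical_delay mu (K c) - critical_delay mu K0 - critical_delay_deriv mu K0 * (K c - K0))
      + critical_delay_deriv mu K0 * K0 * ((c / (2 + A))\<^sup>2 - (t c)\<^sup>2)
      = critical_delay mu (K c) - critical_delay mu K0 + critical_delay_deriv mu K0 * K0 * (c / (2 + A))\<^sup>2" for c
    by (simp add: K_def t_def equilibrium_gain_def algebra_simps)
  from bigo[unfolded rearrange] show ?thesis by (simp only: K_def)
qed

lemma critical_delay_symmetric:
  fixes lam mu th :: real
  assumes mu: "0 < mu" and gain: "2 * mu < lam * th"
  defines "wcr \<equiv> sqrt (lam\<^sup>2 * th\<^sup>2 - 4 * mu\<^sup>2) / 2"
  defines "Dcr \<equiv> arccos (- (2 * mu) / (lam * th)) / wcr"
  shows "critical_delay mu (lam * th / 2) = Dcr"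
    and "- critical_delay_deriv mu (lam * th / 2) * (lam * th / 2) * (1 / (2 + lam * th / mu))\<^sup>2
           = (4 * mu ^ 3 + mu\<^sup>2 * lam\<^sup>2 * th\<^sup>2 * Dcr) / (4 * wcr\<^sup>2 * (lam * th + 2 * mu)\<^sup>2)"
proof -
  define K0 where "K0 = lam * th / 2"
  have "lam\<^sup>2 * th\<^sup>2 - 4 * mu\<^sup>2 = 2\<^sup>2 * (K0\<^sup>2 - mu\<^sup>2)"
    by (simp add: K0_def power_divide algebra_simps)
  then have "sqrt (lam\<^sup>2 * th\<^sup>2 - 4 * mu\<^sup>2) = sqrt (2\<^sup>2) * sqrt (K0\<^sup>2 - mu\<^sup>2)"
    by (simp only: real_sqrt_mult)
  then have wcr: "wcr = sqrt (K0\<^sup>2 - mu\<^sup>2)" by (simp add: wcr_def)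
  have "0 < wcr" using mu gain by (simp add: wcr K0_def power_strict_mono)
  have "- mu / K0 = - (2 * mu) / (lam * th)" by (simp add: K0_def)
  then show Dcr: "critical_delay mu (lam * th / 2) = Dcr"
    unfolding K0_def[symmetric] critical_delay_def Dcr_def wcr by simp
  have "K0\<^sup>2 - mu\<^sup>2 = wcr\<^sup>2" using mu gain by (simp add: wcr K0_def power_strict_mono less_imp_le)
  moreover have "0 < K0" using mu gain by (simp add: K0_def)
  ultimately have "- critical_delay_deriv mu K0 * K0 = (mu + K0\<^sup>2 * Dcr) / wcr\<^sup>2"
    using Dcr \<open>0 < wcr\<close> by (simp add: critical_delay_deriv_def K0_def[symmetric] field_simps power2_eq_square)
  moreover have "(1 / (2 + lam * th / mu))\<^sup>2 = mu\<^sup>2 / (lam * th + 2 * mu)\<^sup>2"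
    using mu by (simp add: field_simps)
  moreover have "4 * mu ^ 3 + mu\<^sup>2 * lam\<^sup>2 * th\<^sup>2 * Dcr = 4 * ((mu + K0\<^sup>2 * Dcr) * mu\<^sup>2)"
    by (simp add: K0_def power2_eq_square power3_eq_cube algebra_simps)
  ultimately show "- critical_delay_deriv mu (lam * th / 2) * (lam * th / 2) * (1 / (2 + lam * th / mu))\<^sup>2
           = (4 * mu ^ 3 + mu\<^sup>2 * lam\<^sup>2 * th\<^sup>2 * Dcr) / (4 * wcr\<^sup>2 * (lam * th + 2 * mu)\<^sup>2)"
    unfolding K0_def[symmetric] by simp
qed

lemma modified_critical_delay_expansion:
  fixes lam mu th alh :: real
  assumes mu: "0 < mu" and gain: "2 * mu < lam * th"
  defines "wcr \<equiv> sqrt (lam\<^sup>2 * th\<^sup>2 - 4 * mu\<^sup>2) / 2"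
  defines "Dcr \<equiv> arccos (- (2 * mu) / (lam * th)) / wcr"
  shows "(\<lambda>eps. modified_critical_delay lam mu th alh eps - Dcr
            - (4 * mu ^ 3 + mu\<^sup>2 * lam\<^sup>2 * th\<^sup>2 * Dcr) / (4 * wcr\<^sup>2 * (lam * th + 2 * mu)\<^sup>2) * eps\<^sup>2 * alh\<^sup>2)
          \<in> O[at 0](\<lambda>eps. eps ^ 3)"
proof -
  define K0 A where "K0 = lam * th / 2" and "A = lam * th / mu"
  note coeff = critical_delay_symmetric[OF mu gain, folded wcr_def Dcr_def K0_def A_def]
  have "mu < K0" "0 \<le> A" using mu gain by (simp_all add: K0_def A_def)
  have "(\<lambda>eps. modified_critical_delay lam mu th alh eps - critical_delay mu K0
          + critical_delay_deriv mu K0 * K0 * (eps * alh / (2 + A))\<^sup>2) \<in> O[at 0](\<lambda>eps. (eps * alh) ^ 3)"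
    unfolding modified_critical_delay_def K0_def[symmetric] A_def[symmetric]
    by (rule landau_o.big.compose[OF critical_delay_equilibrium_gain_expansion[OF mu \<open>mu < K0\<close> \<open>0 \<le> A\<close>]])
       (auto intro!: tendsto_eq_intros)
  moreover have "(\<lambda>eps. (eps * alh) ^ 3) \<in> O[at 0](\<lambda>eps. eps ^ 3)" by (simp add: power_mult_distrib)
  moreover have "critical_delay_deriv mu K0 * K0 * (eps * alh / (2 + A))\<^sup>2
      = - (- critical_delay_deriv mu K0 * K0 * (1 / (2 + A))\<^sup>2) * eps\<^sup>2 * alh\<^sup>2" for eps
    by (simp add: power_mult_distrib power_divide)
  ultimately show ?thesis using landau_o.big.trans unfolding coeff by simp
qed

theorem mainTheorem2:
  fixes lam mu th al alh :: real
  assumes "lam > 0" and "mu > 0" and "th > 0" and "lam * th > 2 * mu"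
  defines "wcr \<equiv> sqrt (lam\<^sup>2 * th\<^sup>2 - 4 * mu\<^sup>2) / 2"
  defines "Dcr \<equiv> arccos (- (2 * mu) / (lam * th)) / wcr"
  shows "\<exists>Dmod :: real \<Rightarrow> real.
     (\<forall>\<^sub>F eps in nhds 0.
        (\<forall>D. 0 < D \<and> D < Dmod eps \<longrightarrow> lin_stable lam mu th al alh eps D) \<and>
        (\<exists>\<delta>>0. \<forall>D. Dmod eps < D \<and> D < Dmod eps + \<delta> \<longrightarrow> lin_unstable lam mu th al alh eps D)) \<and>
     (\<lambda>eps. Dmod eps - Dcr
        - (4 * mu ^ 3 + mu\<^sup>2 * lam\<^sup>2 * th\<^sup>2 * Dcr) / (4 * wcr\<^sup>2 * (lam * th + 2 * mu)\<^sup>2)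
          * eps\<^sup>2 * alh\<^sup>2) \<in> O[at (0::real)](\<lambda>eps. eps ^ 3)"
proof -
  have "\<forall>\<^sub>F eps in nhds 0.
     (\<forall>D. 0 < D \<and> D < modified_critical_delay lam mu th alh eps \<longrightarrow> lin_stable lam mu th al alh eps D) \<and>
     (\<exists>\<delta>>0. \<forall>D. modified_critical_delay lam mu th alh eps < D \<and> D < modified_critical_delay lam mu th alh eps + \<delta>
        \<longrightarrow> lin_unstable lam mu th al alh eps D)"
    using eventually_stability_switch[OF \<open>mu > 0\<close> \<open>lam * th > 2 * mu\<close>, where al = al and alh = alh]
    by (elim eventually_mono) (auto intro!: exI[of _ 1])
  moreover note modified_critical_delay_expansion[OF \<open>mu > 0\<close> \<open>lam * th > 2 * mu\<close>, folded wcr_def Dcr_def]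
  ultimately show ?thesis by blast
qed

end
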